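(* Let $r\ge 2$ be an integer. There is a constant $c_r>0$ depending only on $r$ such that the following holds. Let $G=(V,E)$ be a graph with $|V|=n$, where $n$ is sufficiently large (depending on $r$), and let $T\subseteq E^r$ be a set of $r$-tuples of edges. Then $V$ can be partitioned into disjoint sets $V_1,\ldots,V_r$, each of size $\lceil n/r\rceil$ or $\lfloor n/r \rfloor$, such that at least $c_r|T|$ of the tuples in $T$ consist only of edges each of which has both of its endpoints in the same part $V_j$ (different edges of a tuple may lie in different parts). *)

theory Defs
  imports Complex_Main
begin

definition is_graph :: "'a set \<Rightarrow> 'a set set \<Rightarrow> bool" where
  "is_graph V E \<longleftrightarrow> finite V \<and> (\<forall>e\<in>E. e \<subseteq> V \<and> card e = 2)"

definition balanced_partition :: "nat \<Rightarrow> 'a set \<Rightarrow> (nat \<Rightarrow> 'a set) \<Rightarrow> bool" where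
  "balanced_partition r V P \<longleftrightarrow>
     (\<Union>j<r. P j) = V \<and>
     (\<forall>i<r. \<forall>j<r. i \<noteq> j \<longrightarrow> P i \<inter> P j = {}) \<and>
     (\<forall>j<r. int (card (P j)) = \<lfloor>real (card V) / real r\<rfloor> \<or>
            int (card (P j)) = \<lceil>real (card V) / real r\<rceil>)"

end

theory Submission
  imports Defs
begin

text \<open>
  Let \<open>m = \<lfloor>n/r\<rfloor>\<close>. Choose one part \<open>S\<close> among all \<open>m\<close>-subsets of \<open>V\<close> and complete it
  to a balanced partition arbitrarily. The edges of a tuple span a set \<open>W\<close> of \<open>w \<le> 2r\<close>
  vertices, and the proportion of \<open>m\<close>-sets containing \<open>W\<close> is
  \<open>C(n-w, m-w) / C(n, m) = C(m, w) / C(n, w) \<ge> (m / (w n))^w \<ge> (1 / (4 r^2))^(2r)\<close>,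
  using \<open>n \<le> 2 r m\<close> once \<open>n \<ge> 2 r^2\<close>. By double counting, some \<open>S\<close> contains the vertex
  sets of at least this fraction of all tuples, and all of their edges then lie inside the part \<open>S\<close>.
\<close>

lemma card_residue_class_lessThan:
  fixes r j n :: nat
  assumes "j < r"
  shows "card {i. i < n \<and> i mod r = j} = n div r + of_bool (j < n mod r)"
proof (induction n)
  case 0
  show ?case by simp
next
  case (Suc n)
  have "{i. i < Suc n \<and> i mod r = j} = {i. i < n \<and> i mod r = j} \<union> (if n mod r = j then {n} else {})"
    by (auto simp: less_Suc_eq)
  then have "card {i. i < Suc n \<and> i mod r = j} = card {i. i < n \<and> i mod r = j} + of_bool (n mod r = j)"
    by (simp add: card_insert_if)
  then show ?case using Suc assms by (auto simp: mod_Suc div_Suc)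
qed

lemma balanced_partition_residue_classes:
  assumes "0 < r"
  shows "balanced_partition r {..<n} (\<lambda>j. {i. i < n \<and> i mod r = j})"
proof -
  have "int (n div r + of_bool (j < n mod r)) = \<lfloor>real n / real r\<rfloor> \<or>
        int (n div r + of_bool (j < n mod r)) = \<lceil>real n / real r\<rceil>" for j
  proof (cases "j < n mod r")
    case True
    then have "\<not> r dvd n" by auto
    then have "real n / real r \<noteq> of_int \<lfloor>real n / real r\<rfloor>"
      using assms by (auto simp: floor_divide_of_nat_eq field_simps simp flip: of_nat_mult)
         (metis dvd_triv_left)
    then show ?thesis using True by (simp add: ceiling_altdef floor_divide_of_nat_eq)
  next
    case False
    then show ?thesis by (simp add: floor_divide_of_nat_eq)
  qed
  then show ?thesis
    using assms by (auto simp: balanced_partition_def card_residue_class_lessThan)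
qed

lemma balanced_partition_image:
  assumes "bij_betw g A B" "balanced_partition r A P"
  shows "balanced_partition r B (\<lambda>j. g ` P j)"
proof -
  have parts: "(\<Union>j<r. P j) = A" "\<forall>i<r. \<forall>j<r. i \<noteq> j \<longrightarrow> P i \<inter> P j = {}"
    and sizes: "\<forall>j<r. int (card (P j)) = \<lfloor>real (card A) / real r\<rfloor> \<or>
            int (card (P j)) = \<lceil>real (card A) / real r\<rceil>"
    using assms(2) by (auto simp: balanced_partition_def)
  have inj: "inj_on g A" and img: "g ` A = B" and "card A = card B"
    using assms(1) by (auto simp: bij_betw_def bij_betw_same_card)
  moreover have "P j \<subseteq> A" if "j < r" for j using parts(1) that by blast
  ultimately have "card (g ` P j) = card (P j)" if "j < r" for j
    using that by (meson card_image inj_on_subset)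
  moreover have "(\<Union>j<r. g ` P j) = B" using parts(1) img by (metis image_UN)
  moreover have "g ` P i \<inter> g ` P j = {}" if "i < r" "j < r" "i \<noteq> j" for i j
    using parts that inj \<open>\<And>j. j < r \<Longrightarrow> P j \<subseteq> A\<close> by (metis image_empty inj_on_image_Int)
  ultimately show ?thesis
    using sizes \<open>card A = card B\<close> by (simp add: balanced_partition_def)
qed

lemma ex_bij_betw_with_image:
  assumes "finite A" "finite B" "card A = card B" "R \<subseteq> A" "S \<subseteq> B" "card R = card S"
  shows "\<exists>g. bij_betw g A B \<and> g ` R = S"
proof -
  have "finite R" "finite S" using assms finite_subset by auto
  then obtain h where h: "bij_betw h R S"
    using assms(6) finite_same_card_bij by blast
  have "card (A - R) = card (B - S)"
    using assms \<open>finite R\<close> \<open>finite S\<close> by (simp add: card_Diff_subset)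
  then obtain h' where h': "bij_betw h' (A - R) (B - S)"
    using assms(1,2) finite_same_card_bij by blast
  define g where "g x = (if x \<in> R then h x else h' x)" for x
  have "bij_betw g R S" using h by (rule bij_betw_cong[THEN iffD1, rotated]) (simp add: g_def)
  moreover have "bij_betw g (A - R) (B - S)"
    using h' by (rule bij_betw_cong[THEN iffD1, rotated]) (simp add: g_def)
  ultimately have "bij_betw g (R \<union> (A - R)) (S \<union> (B - S))"
    by (rule bij_betw_combine) auto
  moreover have "R \<union> (A - R) = A" "S \<union> (B - S) = B" using assms(4,5) by auto
  ultimately show ?thesis
    using \<open>bij_betw g R S\<close> by (auto simp: bij_betw_def)
qed

lemma balanced_partition_with_part:
  assumes "finite V" "0 < r" "S \<subseteq> V" "card S = card V div r"
  shows "\<exists>P. balanced_partition r V P \<and> P (r - 1) = S"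
proof -
  let ?n = "card V"
  let ?C = "\<lambda>j. {i. i < ?n \<and> i mod r = j}"
  \<comment> \<open>the residue class of \<open>r - 1\<close> is a smallest one\<close>
  have last_class: "card (?C (r - 1)) = card S"
    using assms mod_less_divisor[OF assms(2), of ?n] by (simp add: card_residue_class_lessThan)
  obtain g where g: "bij_betw g {..<?n} V" "g ` ?C (r - 1) = S"
    using ex_bij_betw_with_image[OF finite_lessThan assms(1) _ _ assms(3) last_class] by force
  show ?thesis
    using balanced_partition_image[OF g(1) balanced_partition_residue_classes[OF assms(2)]] g(2)
    by blast
qed

lemma card_subsets_containing:
  assumes "finite V" "W \<subseteq> V" "card W \<le> m"
  shows "card {S. S \<subseteq> V \<and> card S = m \<and> W \<subseteq> S} = (card V - card W) choose (m - card W)"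
proof -
  have "finite W" using assms finite_subset by blast
  have "{S. S \<subseteq> V \<and> card S = m \<and> W \<subseteq> S} = (\<lambda>X. X \<union> W) ` {X. X \<subseteq> V - W \<and> card X = m - card W}"
  proof (intro equalityI subsetI)
    fix S assume S: "S \<in> {S. S \<subseteq> V \<and> card S = m \<and> W \<subseteq> S}"
    then have "S = (S - W) \<union> W" "card (S - W) = m - card W"
      using \<open>finite W\<close> by (auto simp: card_Diff_subset)
    then show "S \<in> (\<lambda>X. X \<union> W) ` {X. X \<subseteq> V - W \<and> card X = m - card W}"
      using S by blast
  next
    fix S assume "S \<in> (\<lambda>X. X \<union> W) ` {X. X \<subseteq> V - W \<and> card X = m - card W}"
    then obtain X where X: "X \<subseteq> V - W" "card X = m - card W" "S = X \<union> W" by blast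
    have "finite X" "X \<inter> W = {}" using X(1) assms(1) finite_subset by blast+
    then have "card S = card X + card W"
      using X(3) \<open>finite W\<close> by (simp add: card_Un_disjoint)
    then show "S \<in> {S. S \<subseteq> V \<and> card S = m \<and> W \<subseteq> S}" using X assms by auto
  qed
  moreover have "inj_on (\<lambda>X. X \<union> W) {X. X \<subseteq> V - W \<and> card X = m - card W}"
    by (rule inj_onI) blast
  ultimately show ?thesis
    using assms \<open>finite W\<close> by (simp add: card_image n_subsets card_Diff_subset)
qed

lemma binomial_superset_ratio_ge:
  fixes k m n :: nat
  assumes "k \<le> m" "m \<le> n"
  shows "real (n choose m) * (real m / (real k * real n)) ^ k \<le> real ((n - k) choose (m - k))"
proof (cases "k = 0")
  case True
  then show ?thesis by simp
next
  case False
  then have "0 < n" using assms by simp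
  have "real (n choose m) * (real m / (real k * real n)) ^ k
        = real (n choose m) * (real m / real k) ^ k / real n ^ k"
    by (simp add: field_simps)
  also have "\<dots> \<le> real (n choose m) * real (m choose k) / real n ^ k"
    using binomial_ge_n_over_k_pow_k[OF assms(1)] by (intro divide_right_mono mult_left_mono) auto
  also have "\<dots> = real (n choose k) * real ((n - k) choose (m - k)) / real n ^ k"
    by (metis choose_mult[OF assms] of_nat_mult)
  also have "\<dots> \<le> real ((n - k) choose (m - k))"
  proof -
    have "real (n choose k) \<le> real n ^ k"
      using binomial_le_pow[of k n] assms by (metis le_trans of_nat_le_iff of_nat_power)
    then have "real (n choose k) * real ((n - k) choose (m - k))
               \<le> real n ^ k * real ((n - k) choose (m - k))"
      by (rule mult_right_mono) simp
    then show ?thesis using \<open>0 < n\<close> by (simp add: pos_divide_le_eq mult.commute)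
  qed
  finally show ?thesis .
qed

lemma card_subsets_containing_ge:
  assumes "finite V" "W \<subseteq> V" "card W \<le> w" "w \<le> m" "m \<le> card V"
    and "0 \<le> b" "b \<le> 1" "b * real w * real (card V) \<le> real m"
  shows "b ^ w * real (card {S. S \<subseteq> V \<and> card S = m})
         \<le> real (card {S. S \<subseteq> V \<and> card S = m \<and> W \<subseteq> S})"
proof -
  let ?k = "card W" and ?n = "card V"
  have "b ^ w \<le> (real m / (real ?k * real ?n)) ^ ?k"
  proof (cases "?k = 0")
    case True
    then show ?thesis using assms(6,7) by (simp add: power_le_one)
  next
    case False
    then have "0 < ?n" using assms(1,2) card_mono[OF assms(1,2)] by linarith
    have "b * real ?k * real ?n \<le> b * real w * real ?n"
      using assms(3,6) by (intro mult_right_mono mult_left_mono) auto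
    then have "b \<le> real m / (real ?k * real ?n)"
      using assms(8) False \<open>0 < ?n\<close> by (simp add: pos_le_divide_eq mult.assoc)
    then have "b ^ ?k \<le> (real m / (real ?k * real ?n)) ^ ?k"
      using assms(6) by (rule power_mono)
    moreover have "b ^ w \<le> b ^ ?k" using assms(3,6,7) by (rule power_decreasing)
    ultimately show ?thesis by linarith
  qed
  then have "b ^ w * real (?n choose m)
             \<le> real (?n choose m) * (real m / (real ?k * real ?n)) ^ ?k"
    by (metis mult.commute mult_right_mono of_nat_0_le_iff)
  also have "\<dots> \<le> real ((?n - ?k) choose (m - ?k))"
    using assms(3-5) by (intro binomial_superset_ratio_ge) auto
  finally show ?thesis
    using assms by (simp add: n_subsets card_subsets_containing)
qed

lemma card_Union_set_le:
  assumes "\<And>e. e \<in> set es \<Longrightarrow> card e \<le> k"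
  shows "card (\<Union>(set es)) \<le> k * length es"
proof -
  have "card (\<Union>(set es)) \<le> sum card (set es)" by (rule card_Union_le_sum_card)
  also have "\<dots> \<le> k * card (set es)"
    using assms sum_bounded_above[of "set es" card k] by (simp add: mult.commute)
  also have "\<dots> \<le> k * length es" by (simp add: card_length)
  finally show ?thesis .
qed

lemma double_counting_exists_ge:
  fixes c :: real
  assumes "finite A" "finite B" "B \<noteq> {}"
    and "\<And>a. a \<in> A \<Longrightarrow> c * real (card B) \<le> real (card {b\<in>B. R a b})"
  shows "\<exists>b\<in>B. c * real (card A) \<le> real (card {a\<in>A. R a b})"
proof (rule ccontr)
  assume "\<not> ?thesis"
  then have "\<And>b. b \<in> B \<Longrightarrow> real (card {a\<in>A. R a b}) < c * real (card A)" by auto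
  moreover have "card B > 0" using assms(2,3) by (simp add: card_gt_0_iff)
  ultimately have "(\<Sum>b\<in>B. real (card {a\<in>A. R a b})) < real (card B) * (c * real (card A))"
    by (rule sum_bounded_above_strict)
  also have "\<dots> = (\<Sum>a\<in>A. c * real (card B))" by simp
  also have "\<dots> \<le> (\<Sum>a\<in>A. real (card {b\<in>B. R a b}))" using assms(4) by (rule sum_mono)
  also have "\<dots> = (\<Sum>b\<in>B. real (card {a\<in>A. R a b}))"
    using assms(1,2) sum.swap[where g = "\<lambda>a b. of_bool (R a b) :: real" and A = A and B = B]
    by (simp add: Int_def)
  finally show False by simp
qed

lemma exists_subset_containing_many:
  fixes W :: "'b \<Rightarrow> 'a set" and b :: real
  assumes "finite V" "finite T" "\<And>t. t \<in> T \<Longrightarrow> W t \<subseteq> V" "\<And>t. t \<in> T \<Longrightarrow> card (W t) \<le> w"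
    and "w \<le> m" "m \<le> card V" "0 \<le> b" "b \<le> 1" "b * real w * real (card V) \<le> real m"
  shows "\<exists>S\<subseteq>V. card S = m \<and> b ^ w * real (card T) \<le> real (card {t\<in>T. W t \<subseteq> S})"
proof -
  let ?S = "{S. S \<subseteq> V \<and> card S = m}"
  have "finite ?S" using assms(1) by simp
  moreover have "?S \<noteq> {}"
    using assms(1,5,6) n_subsets[of V m] zero_less_binomial[of m "card V"] by force
  moreover have "b ^ w * real (card ?S) \<le> real (card {S\<in>?S. W t \<subseteq> S})" if "t \<in> T" for t
  proof -
    have "{S\<in>?S. W t \<subseteq> S} = {S. S \<subseteq> V \<and> card S = m \<and> W t \<subseteq> S}" by auto
    then show ?thesis
      using card_subsets_containing_ge[OF assms(1) assms(3)[OF that] assms(4)[OF that] assms(5-9)] by simp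
  qed
  ultimately obtain S where "S \<in> ?S" "b ^ w * real (card T) \<le> real (card {t\<in>T. W t \<subseteq> S})"
    using double_counting_exists_ge[OF assms(2), of ?S "b ^ w" "\<lambda>t S. W t \<subseteq> S"] by blast
  then show ?thesis by blast
qed

lemma density_bound_le_div:
  assumes "0 < r" "r \<le> n"
  shows "real (2 * r) * real n / (4 * real r ^ 2) \<le> real (n div r)"
proof -
  have "n \<le> 2 * r * (n div r)"
  proof -
    have "n = r * (n div r) + n mod r" by simp
    moreover have "n mod r < r" using assms(1) by simp
    moreover have "r \<le> r * (n div r)" using assms div_le_mono[OF assms(2), of r] by simp
    ultimately show ?thesis by linarith
  qed
  then have "real n \<le> 2 * real r * real (n div r)"
    by (metis of_nat_le_iff of_nat_mult of_nat_numeral)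
  then have "real (2 * r) * real n \<le> real (2 * r) * (2 * real r * real (n div r))"
    by (intro mult_left_mono) auto
  then show ?thesis using assms(1) by (simp add: pos_divide_le_eq power2_eq_square algebra_simps)
qed

lemma balanced_partition_keeping_tuples:
  assumes "0 < r" "2 * r ^ 2 \<le> card V" "is_graph V E" "T \<subseteq> {ts. length ts = r \<and> set ts \<subseteq> E}"
  shows "\<exists>P. balanced_partition r V P \<and>
           (1 / (4 * real r ^ 2)) ^ (2 * r) * real (card T)
             \<le> real (card {ts\<in>T. \<forall>e\<in>set ts. \<exists>j<r. e \<subseteq> P j})"
proof -
  let ?n = "card V"
  define m where "m = ?n div r"
  define b :: real where "b = 1 / (4 * real r ^ 2)"
  have "finite V" and edges: "\<And>e. e \<in> E \<Longrightarrow> e \<subseteq> V \<and> card e = 2"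
    using assms(3) by (auto simp: is_graph_def)
  then have "finite E" by (meson Pow_iff finite_Pow_iff finite_subset subsetI)
  have "finite T"
    by (rule finite_subset[OF _ finite_lists_length_eq[OF \<open>finite E\<close>, of r]]) (use assms(4) in auto)
  have "2 * r \<le> m"
    using div_le_mono[OF assms(2), of r] assms(1) unfolding m_def by (simp add: power2_eq_square)
  have "r \<le> ?n" using assms(2) le_square[of r] unfolding power2_eq_square by linarith
  have "b * real (2 * r) * real ?n = real (2 * r) * real ?n / (4 * real r ^ 2)" by (simp add: b_def)
  also have "\<dots> \<le> real m" unfolding m_def using assms(1) \<open>r \<le> ?n\<close> by (rule density_bound_le_div)
  finally have "b * real (2 * r) * real ?n \<le> real m" .
  moreover have "\<Union>(set ts) \<subseteq> V" "card (\<Union>(set ts)) \<le> 2 * r" if "ts \<in> T" for ts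
    using that assms(4) edges card_Union_set_le[of ts 2] by force+
  moreover have "0 \<le> b" "b \<le> 1"
  proof -
    have "1 \<le> real r ^ 2" using assms(1) by (intro one_le_power) simp
    then show "0 \<le> b" "b \<le> 1" by (simp_all add: b_def divide_le_eq)
  qed
  ultimately obtain S where "S \<subseteq> V" "card S = m"
    and S: "b ^ (2 * r) * real (card T) \<le> real (card {ts\<in>T. \<Union>(set ts) \<subseteq> S})"
    using exists_subset_containing_many[OF \<open>finite V\<close> \<open>finite T\<close>, of "\<lambda>ts. \<Union>(set ts)" "2 * r" m b]
      \<open>2 * r \<le> m\<close> by (auto simp: m_def)
  then obtain P where P: "balanced_partition r V P" "P (r - 1) = S"
    using balanced_partition_with_part[OF \<open>finite V\<close> assms(1)] unfolding m_def by blast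
  have "{ts\<in>T. \<Union>(set ts) \<subseteq> S} \<subseteq> {ts\<in>T. \<forall>e\<in>set ts. \<exists>j<r. e \<subseteq> P j}"
    using P(2) assms(1) by (auto intro!: exI[of _ "r - 1"])
  then have "card {ts\<in>T. \<Union>(set ts) \<subseteq> S} \<le> card {ts\<in>T. \<forall>e\<in>set ts. \<exists>j<r. e \<subseteq> P j}"
    using \<open>finite T\<close> by (intro card_mono) auto
  then show ?thesis using P(1) S unfolding b_def by force
qed

theorem lemma2p5:
  fixes r :: nat
  assumes "r \<ge> 2"
  shows "\<exists>c::real. c > 0 \<and> (\<exists>N::nat. \<forall>n\<ge>N. \<forall>(V::nat set) (E::nat set set) (T::nat set list set).
           is_graph V E \<and> card V = n \<and> T \<subseteq> {ts. length ts = r \<and> set ts \<subseteq> E} \<longrightarrow>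
           (\<exists>P. balanced_partition r V P \<and>
                real (card {ts\<in>T. \<forall>e\<in>set ts. \<exists>j<r. e \<subseteq> P j}) \<ge> c * real (card T)))"
proof -
  define c :: real where "c = (1 / (4 * real r ^ 2)) ^ (2 * r)"
  have "c > 0" using assms by (simp add: c_def)
  moreover have "\<exists>P. balanced_partition r V P \<and>
                  real (card {ts\<in>T. \<forall>e\<in>set ts. \<exists>j<r. e \<subseteq> P j}) \<ge> c * real (card T)"
    if "2 * r ^ 2 \<le> card V" "is_graph V E" "T \<subseteq> {ts. length ts = r \<and> set ts \<subseteq> E}"
    for V :: "nat set" and E and T :: "nat set list set"
    using balanced_partition_keeping_tuples[OF _ that] assms unfolding c_def by simp
  ultimately show ?thesis by blast
qed

end
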